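(* In the infinite-color urn model with parameters $\ell,s$ and initial cumulative counts $m_1,\dots,m_s$, let $k\ge s$, $p=k-s+1$, and $n\ge \ell p$. Then $$M_k(n)\sim \mathrm{Pimm}_\ell\big(1,\;m_s+\ell p+(k-s),\;n-\ell p\big).$$ Furthermore, conditionally on $M_{k+1}(n)$, $$M_k(n)\sim\begin{cases}\mathrm{Pclas}\big(m_{k+1}-m_k,\;m_k,\;M_{k+1}(n)-m_{k+1}\big)&\text{if }1\le k<s,\\ \mathrm{Pclas}\big(1,\;m_s+\ell p+(k-s),\;M_{k+1}(n)-m_s-(\ell+1)p\big)&\text{if }k\ge s\ (\text{and } n\ge\ell p).\end{cases}$$
   Context: Infinite-color urn model: at time $0$ the urn contains balls of colors $1,\dots,s$ (at least one of each). Fix an integer $\ell\ge1$. At the $n$th step a ball is drawn uniformly at random and returned with one additional ball of the same color; if $n$ is a multiple of $\ell$, one ball of the new color $s+n/\ell$ is added after the $n$th draw. $M_k(n)$ is the number of balls with colors in $\{1,\dots,k\}$ after step $n$ is completed, and $m_k=M_k(0)$ (with $m_1\ge1$, $m_{k+1}-m_k\ge1$ for $k<s$). $\mathrm{Pclas}(b,w,m)$ denotes the distribution of the number of white balls in a classical Pólya urn (draw a uniformly random ball, return it with one more of the same color) after $m$ draws, starting with $b$ black and $w$ white balls. $\mathrm{Pimm}_\ell(b,w,m)$ denotes the distribution of the number of white balls after $m$ steps of the following urn started with $b$ black and $w$ white balls: at step $j$ a uniformly random ball is drawn and returned with one more of the same color, and if $j$ is a multiple of $\ell$ a black ball is added after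 this draw. *)

theory Defs
  imports "HOL-Probability.Probability"
begin

(* ---------- Infinite-color urn ----------
   A state is a list of counts: entry i (0-based) is the number of balls of colour i+1. *)

definition balls_mset :: "nat list \<Rightarrow> nat multiset" where
  "balls_mset xs = (\<Sum>i<length xs. replicate_mset (xs ! i) i)"

definition urn_step :: "nat \<Rightarrow> nat \<Rightarrow> nat list \<Rightarrow> nat list pmf" where
  "urn_step l n xs =
     map_pmf (\<lambda>i. let ys = xs[i := xs ! i + 1] in if l dvd n then ys @ [1] else ys)
             (pmf_of_multiset (balls_mset xs))"

fun urn :: "nat \<Rightarrow> nat list \<Rightarrow> nat \<Rightarrow> nat list pmf" where
  "urn l c0 0 = return_pmf c0"
| "urn l c0 (Suc n) = bind_pmf (urn l c0 n) (urn_step l (Suc n))"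

definition Mk :: "nat \<Rightarrow> nat list \<Rightarrow> nat" where
  "Mk k xs = sum_list (take k xs)"

definition mcum :: "nat list \<Rightarrow> nat \<Rightarrow> nat" where
  "mcum c0 k = sum_list (take k c0)"

(* ---------- Two-colour urns ----------
   state (b, w) = (black, white); imm j says whether a black ball is added after step j *)
definition two_step :: "(nat \<Rightarrow> bool) \<Rightarrow> nat \<Rightarrow> nat \<times> nat \<Rightarrow> (nat \<times> nat) pmf" where
  "two_step imm j bw =
     map_pmf (\<lambda>white. let (b, w) = bw;
                           (b', w') = (if white then (b, w + 1) else (b + 1, w))
                       in if imm j then (b' + 1, w') else (b', w'))
             (pmf_of_multiset (replicate_mset (fst bw) False + replicate_mset (snd bw) True))"

fun two_urn :: "(nat \<Rightarrow> bool) \<Rightarrow> nat \<Rightarrow> nat \<Rightarrow> nat \<Rightarrow> (nat \<times> nat) pmf" where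
  "two_urn imm b w 0 = return_pmf (b, w)"
| "two_urn imm b w (Suc m) = bind_pmf (two_urn imm b w m) (two_step imm (Suc m))"

definition Pclas :: "nat \<Rightarrow> nat \<Rightarrow> nat \<Rightarrow> nat pmf" where
  "Pclas b w m = map_pmf snd (two_urn (\<lambda>_. False) b w m)"

definition Pimm :: "nat \<Rightarrow> nat \<Rightarrow> nat \<Rightarrow> nat \<Rightarrow> nat pmf" where
  "Pimm l b w m = map_pmf snd (two_urn (\<lambda>j. l dvd j) b w m)"

(* "conditionally on X, Y has law D(X)": the joint law of (X,Y) is X's law followed by D *)
definition cond_law :: "'a pmf \<Rightarrow> ('a \<Rightarrow> 'b) \<Rightarrow> ('a \<Rightarrow> 'c) \<Rightarrow> ('b \<Rightarrow> 'c pmf) \<Rightarrow> bool" where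
  "cond_law P X Y D \<longleftrightarrow>
     map_pmf (\<lambda>\<omega>. (X \<omega>, Y \<omega>)) P = bind_pmf (map_pmf X P) (\<lambda>x. map_pmf (Pair x) (D x))"

end

theory Submission
  imports Defs
begin

text \<open>
  A single urn step is a uniform draw from the multiset of balls, so any statistic of the
  configuration whose update depends only on the class of the drawn ball is a Markov chain in
  its own right. For k \<ge> s, colour k + 1 is created at step l (k - s + 1) holding a single
  ball, while colours 1..k hold all the others; from then on the pair (balls outside colours
  1..k, M_k) is a two-colour Polya urn in which every new colour is an immigrating black ball,
  which is the law Pimm.

  For the conditional statements, the total number of balls is deterministic, so
  (M_{k+1}, M_k) is itself a Markov chain: M_{k+1} grows when the drawn ball has one of the
  colours 1..k+1, and in that case M_k makes one classical Polya step among these M_{k+1}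
  balls. As Pclas(b, w, m + 1) is Pclas(b, w, m) followed by such a step, the conditional law
  "M_k given M_{k+1} = M is Pclas(b, w, M - M_0)" is preserved by every urn step, once it holds
  at time 0 (for k < s) or at the creation time of colour k + 1 (for k \<ge> s).
\<close>

section \<open>Uniform draws from multisets\<close>

lemma map_pmf_of_multiset:
  assumes "A \<noteq> {#}"
  shows "map_pmf f (pmf_of_multiset A) = pmf_of_multiset (image_mset f A)"
proof (rule pmf_eqI)
  fix y
  have "pmf (map_pmf f (pmf_of_multiset A)) y = measure (pmf_of_multiset A) (f -` {y} \<inter> set_mset A)"
    by (metis pmf_map measure_Int_set_pmf set_pmf_of_multiset[OF assms])
  also have "\<dots> = (\<Sum>x\<in>f -` {y} \<inter> set_mset A. real (count A x)) / size A"
    using assms by (simp add: measure_measure_pmf_finite sum_divide_distrib)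
  also have "\<dots> = pmf (pmf_of_multiset (image_mset f A)) y"
    using assms by (simp add: count_image_mset)
  finally show "pmf (map_pmf f (pmf_of_multiset A)) y = pmf (pmf_of_multiset (image_mset f A)) y" .
qed

lemma pmf_of_multiset_disintegrate:
  assumes "A \<noteq> {#}"
  shows "pmf_of_multiset A = bind_pmf (pmf_of_multiset (image_mset f A))
           (\<lambda>y. pmf_of_multiset (filter_mset (\<lambda>x. f x = y) A))"
proof (rule pmf_eqI)
  fix x
  let ?A = "\<lambda>y. filter_mset (\<lambda>x. f x = y) A"
  have count_image: "count (image_mset f A) y = size (?A y)" for y
    by (induction A) auto
  have "pmf (bind_pmf (pmf_of_multiset (image_mset f A)) (\<lambda>y. pmf_of_multiset (?A y))) x
      = (\<Sum>y\<in>{f x}. pmf (pmf_of_multiset (?A y)) x * pmf (pmf_of_multiset (image_mset f A)) y)"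
    unfolding pmf_bind
  proof (rule integral_measure_pmf_real)
    fix y assume y: "y \<in> set_pmf (pmf_of_multiset (image_mset f A))"
      and nonzero: "pmf (pmf_of_multiset (?A y)) x \<noteq> 0"
    from y assms have "size (?A y) \<noteq> 0"
      by (simp flip: count_image)
    then have "?A y \<noteq> {#}"
      by auto
    with nonzero show "y \<in> {f x}"
      by (auto split: if_splits)
  qed simp
  also have "\<dots> = pmf (pmf_of_multiset A) x"
  proof (cases "?A (f x) = {#}")
    case True
    have "count A x = count (?A (f x)) x"
      by simp
    then have "count A x = 0"
      unfolding True by simp
    moreover have "count (image_mset f A) (f x) = 0"
      unfolding count_image True by simp
    ultimately show ?thesis
      using assms by simp
  next
    case False
    with assms count_image[of "f x"] show ?thesis
      by simp
  qed
  finally show "pmf (pmf_of_multiset A) x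
      = pmf (bind_pmf (pmf_of_multiset (image_mset f A)) (\<lambda>y. pmf_of_multiset (?A y))) x"
    by simp
qed

lemma pmf_of_multiset_replicate: "0 < n \<Longrightarrow> pmf_of_multiset (replicate_mset n x) = return_pmf x"
  by (rule pmf_eqI) (simp add: indicator_def)

lemma balls_mset_Nil [simp]: "balls_mset [] = {#}"
  by (simp add: balls_mset_def)

lemma balls_mset_snoc: "balls_mset (xs @ [x]) = balls_mset xs + replicate_mset x (length xs)"
proof -
  have "(\<Sum>i<length xs. replicate_mset ((xs @ [x]) ! i) i) = balls_mset xs"
    unfolding balls_mset_def by (rule sum.cong) (auto simp: nth_append)
  then show ?thesis
    by (simp add: balls_mset_def)
qed

lemma size_balls_mset: "size (balls_mset xs) = sum_list xs"
  by (induction xs rule: rev_induct) (auto simp: balls_mset_snoc)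

lemma balls_mset_not_empty:
  assumes "0 < sum_list xs"
  shows "balls_mset xs \<noteq> {#}"
proof
  assume "balls_mset xs = {#}"
  then have "sum_list xs = 0"
    by (simp flip: size_balls_mset)
  with assms show False
    by simp
qed

lemma less_length_if_in_balls_mset: "i \<in># balls_mset xs \<Longrightarrow> i < length xs"
  by (induction xs rule: rev_induct) (auto simp: balls_mset_snoc split: if_splits)

lemma Mk_0 [simp]: "Mk 0 xs = 0"
  by (simp add: Mk_def)

lemma Mk_Cons [simp]: "Mk (Suc k) (x # xs) = x + Mk k xs"
  by (simp add: Mk_def)

lemma Mk_snoc: "Mk k (xs @ [x]) = Mk k xs + (if length xs < k then x else 0)"
  by (simp add: Mk_def)

lemma Mk_eq_sum_list: "length xs \<le> k \<Longrightarrow> Mk k xs = sum_list xs"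
  by (simp add: Mk_def)

lemma Mk_mono: "k \<le> k' \<Longrightarrow> Mk k xs \<le> Mk k' xs"
proof (induction xs arbitrary: k k')
  case (Cons y ys)
  then show ?case by (cases k; cases k') auto
qed (simp add: Mk_def)

lemma Mk_le_sum_list: "Mk k xs \<le> sum_list xs"
  by (metis Mk_eq_sum_list Mk_mono nat_le_linear order_refl)

lemma Mk_list_update_Suc:
  "i < length xs \<Longrightarrow> Mk k (xs[i := Suc (xs ! i)]) = Mk k xs + (if i < k then 1 else 0)"
proof (induction xs arbitrary: i k)
  case (Cons y ys)
  then show ?case by (cases k; cases i) auto
qed simp

lemma image_mset_balls_less:
  "image_mset (\<lambda>i. i < k) (balls_mset xs) =
     replicate_mset (Mk k xs) True + replicate_mset (sum_list xs - Mk k xs) False"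
proof (induction xs rule: rev_induct)
  case (snoc x xs)
  then show ?case
    using Mk_le_sum_list[of k xs]
    by (auto simp: balls_mset_snoc Mk_snoc multiset_eq_iff)
qed (simp add: Mk_def)

lemma image_mset_balls_less_Suc:
  "image_mset (\<lambda>i. (i < Suc k, i < k)) (balls_mset xs) =
     replicate_mset (Mk k xs) (True, True) + replicate_mset (Mk (Suc k) xs - Mk k xs) (True, False)
     + replicate_mset (sum_list xs - Mk (Suc k) xs) (False, False)"
proof (induction xs rule: rev_induct)
  case (snoc x xs)
  then show ?case
    using Mk_mono[of k "Suc k" xs] Mk_le_sum_list[of "Suc k" xs]
    by (auto simp: balls_mset_snoc Mk_snoc multiset_eq_iff)
qed (simp add: Mk_def)

section \<open>Single urn steps and their invariants\<close>

definition urn_draw :: "nat \<Rightarrow> nat \<Rightarrow> nat list \<Rightarrow> nat \<Rightarrow> nat list" where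
  "urn_draw l n xs i = (let ys = xs[i := Suc (xs ! i)] in if l dvd n then ys @ [1] else ys)"

lemma urn_step_eq_map_urn_draw:
  "urn_step l n xs = map_pmf (urn_draw l n xs) (pmf_of_multiset (balls_mset xs))"
  by (simp add: urn_step_def urn_draw_def[abs_def])

lemma length_urn_draw: "length (urn_draw l n xs i) = length xs + (if l dvd n then 1 else 0)"
  by (simp add: urn_draw_def Let_def)

lemma Mk_urn_draw:
  assumes "i < length xs"
  shows "Mk k (urn_draw l n xs i) = Mk k xs + (if i < k then 1 else 0)
           + (if l dvd n \<and> length xs < k then 1 else 0)"
  using assms by (simp add: urn_draw_def Let_def Mk_snoc Mk_list_update_Suc)

lemma sum_list_urn_draw:
  "i < length xs \<Longrightarrow> sum_list (urn_draw l n xs i) = sum_list xs + 1 + (if l dvd n then 1 else 0)"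
  using Mk_urn_draw[of i xs "Suc (length xs)" l n] by (simp add: Mk_eq_sum_list length_urn_draw)

lemma set_pmf_urn_step:
  assumes "0 < sum_list xs" "ys \<in> set_pmf (urn_step l n xs)"
  obtains i where "i < length xs" "ys = urn_draw l n xs i"
  using assms by (auto simp: urn_step_eq_map_urn_draw balls_mset_not_empty
      dest: less_length_if_in_balls_mset)

lemma urn_length_sum_list:
  assumes "0 < sum_list c0" "xs \<in> set_pmf (urn l c0 n)"
  shows "length xs = length c0 + n div l \<and> sum_list xs = sum_list c0 + n + n div l"
  using assms(2)
proof (induction n arbitrary: xs)
  case (Suc n)
  then obtain ys where ys: "ys \<in> set_pmf (urn l c0 n)" and "xs \<in> set_pmf (urn_step l (Suc n) ys)"
    by auto
  moreover have "0 < sum_list ys"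
    using Suc.IH[OF ys] assms(1) by simp
  ultimately obtain i where "i < length ys" "xs = urn_draw l (Suc n) ys i"
    by (blast elim: set_pmf_urn_step)
  moreover have "Suc n div l = n div l + (if l dvd Suc n then 1 else 0)"
    using div_Suc[of n l] by (auto simp: dvd_eq_mod_eq_0)
  ultimately show ?case
    using Suc.IH[OF ys] by (simp add: length_urn_draw sum_list_urn_draw)
qed simp

lemma sum_list_urn_pos: "0 < sum_list c0 \<Longrightarrow> xs \<in> set_pmf (urn l c0 n) \<Longrightarrow> 0 < sum_list xs"
  using urn_length_sum_list by fastforce

lemma urn_Mk_mono:
  assumes "0 < sum_list c0" "n0 \<le> n" "xs \<in> set_pmf (urn l c0 n)"
  shows "\<exists>ys \<in> set_pmf (urn l c0 n0). \<forall>j. Mk j ys \<le> Mk j xs"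
  using assms(2,3)
proof (induction n arbitrary: xs rule: dec_induct)
  case (step n)
  then obtain ys where ys: "ys \<in> set_pmf (urn l c0 n)" and "xs \<in> set_pmf (urn_step l (Suc n) ys)"
    by auto
  with sum_list_urn_pos[OF assms(1) ys] obtain i where "i < length ys" "xs = urn_draw l (Suc n) ys i"
    by (blast elim: set_pmf_urn_step)
  then have "\<forall>j. Mk j ys \<le> Mk j xs"
    by (simp add: Mk_urn_draw)
  with step.IH[OF ys] show ?case
    using order_trans by blast
qed auto

lemma urn_last_colour:
  assumes "0 < sum_list c0" "l dvd Suc n" "xs \<in> set_pmf (urn l c0 (Suc n))"
  obtains ys where "xs = ys @ [1]"
proof -
  from assms(3) obtain zs where zs: "zs \<in> set_pmf (urn l c0 n)" and "xs \<in> set_pmf (urn_step l (Suc n) zs)"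
    by auto
  with sum_list_urn_pos[OF assms(1) zs] obtain i where "xs = urn_draw l (Suc n) zs i"
    by (blast elim: set_pmf_urn_step)
  with assms(2) that show ?thesis
    by (simp add: urn_draw_def Let_def)
qed

section \<open>Lumping onto the two-colour urn with immigration\<close>

lemma map_urn_step_two_step:
  assumes "k \<le> length xs" "0 < sum_list xs" "imm j = (l dvd n)"
  shows "map_pmf (\<lambda>xs. (sum_list xs - Mk k xs, Mk k xs)) (urn_step l n xs)
           = two_step imm j (sum_list xs - Mk k xs, Mk k xs)"
proof -
  define b where "b = sum_list xs - Mk k xs"
  define w where "w = Mk k xs"
  define e where "e = (if l dvd n then 1 else 0 :: nat)"
  define h where "h = (\<lambda>white. if white then (b + e, Suc w) else (Suc b + e, w))"
  have "map_pmf (\<lambda>xs. (sum_list xs - Mk k xs, Mk k xs)) (urn_step l n xs)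
      = map_pmf (h \<circ> (\<lambda>i. i < k)) (pmf_of_multiset (balls_mset xs))"
    unfolding urn_step_eq_map_urn_draw map_pmf_comp
  proof (rule map_pmf_cong[OF refl])
    fix i
    assume "i \<in> set_pmf (pmf_of_multiset (balls_mset xs))"
    then have "i < length xs"
      using assms(2) by (simp add: balls_mset_not_empty less_length_if_in_balls_mset)
    then show "(sum_list (urn_draw l n xs i) - Mk k (urn_draw l n xs i), Mk k (urn_draw l n xs i))
        = (h \<circ> (\<lambda>i. i < k)) i"
      using assms(1) Mk_le_sum_list[of k xs]
      by (auto simp: h_def b_def w_def e_def Mk_urn_draw sum_list_urn_draw)
  qed
  also have "\<dots> = map_pmf h (map_pmf (\<lambda>i. i < k) (pmf_of_multiset (balls_mset xs)))"
    by (simp add: map_pmf_comp comp_def)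
  also have "map_pmf (\<lambda>i. i < k) (pmf_of_multiset (balls_mset xs))
      = pmf_of_multiset (replicate_mset b False + replicate_mset w True)"
    using assms(2)
    by (simp add: map_pmf_of_multiset balls_mset_not_empty image_mset_balls_less b_def w_def add.commute)
  also have "map_pmf h (pmf_of_multiset (replicate_mset b False + replicate_mset w True))
      = two_step imm j (b, w)"
    using assms(3) unfolding two_step_def h_def e_def
    by (intro map_pmf_cong) auto
  finally show ?thesis
    by (simp add: b_def w_def)
qed

lemma urn_lumps_to_two_urn:
  assumes "map_pmf f (urn l c0 n0) = return_pmf (b, w)"
    and "\<And>j xs. xs \<in> set_pmf (urn l c0 (n0 + j)) \<Longrightarrow>
           map_pmf f (urn_step l (Suc (n0 + j)) xs) = two_step imm (Suc j) (f xs)"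
  shows "map_pmf f (urn l c0 (n0 + j)) = two_urn imm b w j"
proof (induction j)
  case (Suc j)
  have "map_pmf f (urn l c0 (n0 + Suc j))
      = bind_pmf (urn l c0 (n0 + j)) (\<lambda>xs. map_pmf f (urn_step l (Suc (n0 + j)) xs))"
    by (simp add: map_bind_pmf)
  also have "\<dots> = bind_pmf (urn l c0 (n0 + j)) (\<lambda>xs. two_step imm (Suc j) (f xs))"
    by (rule bind_pmf_cong) (simp_all add: assms(2))
  also have "\<dots> = two_urn imm b w (Suc j)"
    by (simp flip: Suc.IH add: bind_map_pmf)
  finally show ?case .
qed (simp add: assms(1))

section \<open>Conditional Polya law of nested colour classes\<close>

definition polya_draw :: "nat \<Rightarrow> nat \<Rightarrow> nat pmf" where
  "polya_draw M a = map_pmf (\<lambda>white. if white then Suc a else a)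
     (pmf_of_multiset (replicate_mset (M - a) False + replicate_mset a True))"

lemma polya_draw_eq_pmf_of_multiset:
  "0 < M \<Longrightarrow> polya_draw M a = pmf_of_multiset (replicate_mset (M - a) a + replicate_mset a (Suc a))"
  unfolding polya_draw_def by (subst map_pmf_of_multiset) auto

lemma set_pmf_polya_draw: "M' \<in> set_pmf (polya_draw M a) \<Longrightarrow> M' = a \<or> M' = Suc a"
  by (auto simp: polya_draw_def)

lemma Pclas_0 [simp]: "Pclas b w 0 = return_pmf w"
  by (simp add: Pclas_def)

lemma two_urn_classical_total:
  "(x, y) \<in> set_pmf (two_urn (\<lambda>_. False) b w m) \<Longrightarrow> x + y = b + w + m"
  by (induction m arbitrary: x y) (auto simp: two_step_def split: if_splits)

lemma Pclas_le: "a \<in> set_pmf (Pclas b w m) \<Longrightarrow> a \<le> b + w + m"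
  unfolding Pclas_def using two_urn_classical_total by fastforce

lemma Pclas_Suc: "Pclas b w (Suc m) = bind_pmf (Pclas b w m) (polya_draw (b + w + m))"
proof -
  have "Pclas b w (Suc m)
      = bind_pmf (two_urn (\<lambda>_. False) b w m) (\<lambda>x. map_pmf snd (two_step (\<lambda>_. False) (Suc m) x))"
    by (simp add: Pclas_def map_bind_pmf)
  also have "\<dots> = bind_pmf (two_urn (\<lambda>_. False) b w m) (\<lambda>x. polya_draw (b + w + m) (snd x))"
  proof (rule bind_pmf_cong[OF refl])
    fix x
    assume "x \<in> set_pmf (two_urn (\<lambda>_. False) b w m)"
    then have "fst x = b + w + m - snd x"
      using two_urn_classical_total[of "fst x" "snd x" b w m] by simp
    then show "map_pmf snd (two_step (\<lambda>_. False) (Suc m) x) = polya_draw (b + w + m) (snd x)"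
      unfolding two_step_def polya_draw_def map_pmf_comp
      by (intro map_pmf_cong) (auto split: prod.splits)
  qed
  also have "\<dots> = bind_pmf (Pclas b w m) (polya_draw (b + w + m))"
    by (simp add: Pclas_def bind_map_pmf)
  finally show ?thesis .
qed

lemma cond_law_deterministic:
  assumes "map_pmf (\<lambda>\<omega>. (X \<omega>, Y \<omega>)) P = return_pmf (x, y)" "D x = return_pmf y"
  shows "cond_law P X Y D"
proof -
  have "map_pmf X P = map_pmf fst (map_pmf (\<lambda>\<omega>. (X \<omega>, Y \<omega>)) P)"
    by (simp add: map_pmf_comp)
  then show ?thesis
    using assms by (simp add: cond_law_def bind_return_pmf)
qed

lemma cond_law_step:
  assumes "cond_law P X Y D"
    and "map_pmf (\<lambda>\<omega>. (X \<omega>, Y \<omega>)) P' = bind_pmf (map_pmf (\<lambda>\<omega>. (X \<omega>, Y \<omega>)) P) K"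
    and "\<And>x. x \<in> set_pmf (map_pmf X P) \<Longrightarrow>
           bind_pmf (D x) (\<lambda>y. K (x, y)) = bind_pmf (L x) (\<lambda>x'. map_pmf (Pair x') (D x'))"
  shows "cond_law P' X Y D"
proof -
  have joint: "map_pmf (\<lambda>\<omega>. (X \<omega>, Y \<omega>)) P'
      = bind_pmf (bind_pmf (map_pmf X P) L) (\<lambda>x'. map_pmf (Pair x') (D x'))"
  proof -
    have "map_pmf (\<lambda>\<omega>. (X \<omega>, Y \<omega>)) P'
        = bind_pmf (map_pmf X P) (\<lambda>x. bind_pmf (D x) (\<lambda>y. K (x, y)))"
      using assms(1,2) by (simp add: cond_law_def bind_assoc_pmf bind_map_pmf)
    also have "\<dots> = bind_pmf (map_pmf X P) (\<lambda>x. bind_pmf (L x) (\<lambda>x'. map_pmf (Pair x') (D x')))"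
      by (rule bind_pmf_cong) (simp_all add: assms(3))
    finally show ?thesis
      by (simp add: bind_assoc_pmf)
  qed
  have "map_pmf X P' = map_pmf fst (map_pmf (\<lambda>\<omega>. (X \<omega>, Y \<omega>)) P')"
    by (simp add: map_pmf_comp)
  also have "\<dots> = bind_pmf (map_pmf X P) L"
    unfolding joint by (simp add: map_bind_pmf map_pmf_comp bind_return_pmf')
  finally show ?thesis
    using joint by (simp add: cond_law_def)
qed

text \<open>The law of (M_{k+1}, M_k) after one draw from t balls, given (M_{k+1}, M_k) = (M, a).\<close>

definition nested_step :: "nat \<Rightarrow> nat \<Rightarrow> nat \<Rightarrow> (nat \<times> nat) pmf" where
  "nested_step t M a = pmf_of_multiset (replicate_mset a (Suc M, Suc a)
     + replicate_mset (M - a) (Suc M, a) + replicate_mset (t - M) (M, a))"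

lemma map_urn_step_nested_step:
  assumes "Suc k \<le> length xs" "0 < sum_list xs"
  shows "map_pmf (\<lambda>xs. (Mk (Suc k) xs, Mk k xs)) (urn_step l n xs)
           = nested_step (sum_list xs) (Mk (Suc k) xs) (Mk k xs)"
proof -
  define M where "M = Mk (Suc k) xs"
  define a where "a = Mk k xs"
  define h where "h = (\<lambda>(p, q). (if p then Suc M else M, if q then Suc a else a))"
  have "map_pmf (\<lambda>xs. (Mk (Suc k) xs, Mk k xs)) (urn_step l n xs)
      = map_pmf (h \<circ> (\<lambda>i. (i < Suc k, i < k))) (pmf_of_multiset (balls_mset xs))"
    unfolding urn_step_eq_map_urn_draw map_pmf_comp
  proof (rule map_pmf_cong[OF refl])
    fix i
    assume "i \<in> set_pmf (pmf_of_multiset (balls_mset xs))"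
    then have "i < length xs"
      using assms(2) by (simp add: balls_mset_not_empty less_length_if_in_balls_mset)
    then show "(Mk (Suc k) (urn_draw l n xs i), Mk k (urn_draw l n xs i))
        = (h \<circ> (\<lambda>i. (i < Suc k, i < k))) i"
      using assms(1) by (auto simp: h_def M_def a_def Mk_urn_draw)
  qed
  also have "\<dots> = map_pmf h (map_pmf (\<lambda>i. (i < Suc k, i < k)) (pmf_of_multiset (balls_mset xs)))"
    by (simp add: map_pmf_comp comp_def)
  also have "\<dots> = pmf_of_multiset (image_mset h (image_mset (\<lambda>i. (i < Suc k, i < k)) (balls_mset xs)))"
    using assms(2) by (simp add: map_pmf_of_multiset balls_mset_not_empty del: image_mset.compositionality)
  also have "\<dots> = nested_step (sum_list xs) M a"
    by (simp only: image_mset_balls_less_Suc) (simp add: nested_step_def h_def M_def a_def)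
  finally show ?thesis
    by (simp add: M_def a_def)
qed

lemma nested_step_disintegrate:
  assumes "a \<le> M" "M \<le> t" "0 < t"
  shows "nested_step t M a = bind_pmf (polya_draw t M)
           (\<lambda>M'. if M' = M then return_pmf (M, a) else map_pmf (Pair M') (polya_draw M a))"
proof -
  let ?A = "replicate_mset a (Suc M, Suc a) + replicate_mset (M - a) (Suc M, a)
     + replicate_mset (t - M) (M, a)"
  have "image_mset fst ?A = replicate_mset (t - M) M + replicate_mset M (Suc M)"
    using assms(1) by (auto simp: multiset_eq_iff)
  then have marginal: "pmf_of_multiset (image_mset fst ?A) = polya_draw t M"
    using assms(3) by (simp add: polya_draw_eq_pmf_of_multiset add.commute)
  have "?A \<noteq> {#}"
    using assms by auto
  then have "pmf_of_multiset ?A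
      = bind_pmf (polya_draw t M) (\<lambda>M'. pmf_of_multiset (filter_mset (\<lambda>x. fst x = M') ?A))"
    unfolding marginal[symmetric] by (rule pmf_of_multiset_disintegrate)
  also have "\<dots> = bind_pmf (polya_draw t M)
      (\<lambda>M'. if M' = M then return_pmf (M, a) else map_pmf (Pair M') (polya_draw M a))"
  proof (rule bind_pmf_cong[OF refl])
    fix M'
    assume "M' \<in> set_pmf (polya_draw t M)"
    then consider "M' = M" "M < t" | "M' = Suc M" "0 < M"
      using assms(2,3) by (auto simp: polya_draw_eq_pmf_of_multiset split: if_splits)
    then show "pmf_of_multiset (filter_mset (\<lambda>x. fst x = M') ?A)
        = (if M' = M then return_pmf (M, a) else map_pmf (Pair M') (polya_draw M a))"
    proof cases
      case 1
      then have "filter_mset (\<lambda>x. fst x = M') ?A = replicate_mset (t - M) (M, a)"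
        by (auto simp: multiset_eq_iff)
      with 1 show ?thesis
        by (simp add: pmf_of_multiset_replicate)
    next
      case 2
      then have "filter_mset (\<lambda>x. fst x = M') ?A
          = image_mset (Pair M') (replicate_mset (M - a) a + replicate_mset a (Suc a))"
        by (auto simp: multiset_eq_iff)
      with 2 show ?thesis
        by (simp add: polya_draw_eq_pmf_of_multiset map_pmf_of_multiset)
    qed
  qed
  finally show ?thesis
    unfolding nested_step_def .
qed

lemma Pclas_nested_step:
  assumes "b + w = M0" "M0 \<le> M" "M \<le> t" "0 < t"
  shows "bind_pmf (Pclas b w (M - M0)) (nested_step t M)
           = bind_pmf (polya_draw t M) (\<lambda>M'. map_pmf (Pair M') (Pclas b w (M' - M0)))"
proof -
  have "bind_pmf (Pclas b w (M - M0)) (nested_step t M)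
      = bind_pmf (Pclas b w (M - M0)) (\<lambda>a. bind_pmf (polya_draw t M)
          (\<lambda>M'. if M' = M then return_pmf (M, a) else map_pmf (Pair M') (polya_draw M a)))"
  proof (rule bind_pmf_cong[OF refl])
    fix a
    assume "a \<in> set_pmf (Pclas b w (M - M0))"
    then have "a \<le> M"
      using Pclas_le assms(1,2) by fastforce
    then show "nested_step t M a = bind_pmf (polya_draw t M)
        (\<lambda>M'. if M' = M then return_pmf (M, a) else map_pmf (Pair M') (polya_draw M a))"
      using assms(3,4) by (rule nested_step_disintegrate)
  qed
  also have "\<dots> = bind_pmf (polya_draw t M) (\<lambda>M'. bind_pmf (Pclas b w (M - M0))
          (\<lambda>a. if M' = M then return_pmf (M, a) else map_pmf (Pair M') (polya_draw M a)))"
    by (rule bind_commute_pmf)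
  also have "\<dots> = bind_pmf (polya_draw t M) (\<lambda>M'. map_pmf (Pair M') (Pclas b w (M' - M0)))"
  proof (rule bind_pmf_cong[OF refl])
    fix M'
    assume "M' \<in> set_pmf (polya_draw t M)"
    then have "M' = M \<or> M' = Suc M"
      using set_pmf_polya_draw by blast
    moreover have "Pclas b w (Suc M - M0) = bind_pmf (Pclas b w (M - M0)) (polya_draw M)"
      using assms(1,2) Pclas_Suc[of b w "M - M0"] by (simp add: Suc_diff_le)
    ultimately show "bind_pmf (Pclas b w (M - M0))
          (\<lambda>a. if M' = M then return_pmf (M, a) else map_pmf (Pair M') (polya_draw M a))
        = map_pmf (Pair M') (Pclas b w (M' - M0))"
      by (auto simp: map_pmf_def bind_assoc_pmf bind_return_pmf)
  qed
  finally show ?thesis .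
qed

lemma urn_cond_law_Pclas:
  assumes "0 < sum_list c0" "b + w = M0"
    and "cond_law (urn l c0 n0) (Mk (Suc k)) (Mk k) (\<lambda>M. Pclas b w (M - M0))"
    and "\<And>m xs. n0 \<le> m \<Longrightarrow> xs \<in> set_pmf (urn l c0 m) \<Longrightarrow>
           Suc k \<le> length xs \<and> M0 \<le> Mk (Suc k) xs"
    and "n0 \<le> n"
  shows "cond_law (urn l c0 n) (Mk (Suc k)) (Mk k) (\<lambda>M. Pclas b w (M - M0))"
  using assms(5)
proof (induction n rule: dec_induct)
  case (step m)
  let ?counts = "\<lambda>xs. (Mk (Suc k) xs, Mk k xs)"
  define t where "t = sum_list c0 + m + m div l"
  have total: "sum_list xs = t" if "xs \<in> set_pmf (urn l c0 m)" for xs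
    using urn_length_sum_list[OF assms(1) that] by (simp add: t_def)
  have "map_pmf ?counts (urn l c0 (Suc m))
      = bind_pmf (urn l c0 m) (\<lambda>xs. map_pmf ?counts (urn_step l (Suc m) xs))"
    by (simp add: map_bind_pmf)
  also have "\<dots> = bind_pmf (urn l c0 m) (\<lambda>xs. nested_step t (Mk (Suc k) xs) (Mk k xs))"
  proof (rule bind_pmf_cong[OF refl])
    fix xs
    assume xs: "xs \<in> set_pmf (urn l c0 m)"
    show "map_pmf ?counts (urn_step l (Suc m) xs) = nested_step t (Mk (Suc k) xs) (Mk k xs)"
      using map_urn_step_nested_step[of k xs l "Suc m"] assms(4)[OF step.hyps(1) xs]
        sum_list_urn_pos[OF assms(1) xs] total[OF xs] by simp
  qed
  also have "\<dots> = bind_pmf (map_pmf ?counts (urn l c0 m)) (\<lambda>(M, a). nested_step t M a)"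
    by (simp add: bind_map_pmf)
  finally have joint_step: "map_pmf ?counts (urn l c0 (Suc m))
      = bind_pmf (map_pmf ?counts (urn l c0 m)) (\<lambda>(M, a). nested_step t M a)" .
  show ?case
  proof (rule cond_law_step[OF step.IH joint_step])
    fix M
    assume "M \<in> set_pmf (map_pmf (Mk (Suc k)) (urn l c0 m))"
    then obtain xs where xs: "xs \<in> set_pmf (urn l c0 m)" "M = Mk (Suc k) xs"
      by auto
    then have "M0 \<le> M" "M \<le> t" "0 < t"
      using assms(4)[OF step.hyps(1) xs(1)] total[OF xs(1)] Mk_le_sum_list[of "Suc k" xs]
        sum_list_urn_pos[OF assms(1) xs(1)] by simp_all
    with assms(2) show "bind_pmf (Pclas b w (M - M0)) (\<lambda>a. case (M, a) of (M, a) \<Rightarrow> nested_step t M a)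
        = bind_pmf (polya_draw t M) (\<lambda>M'. map_pmf (Pair M') (Pclas b w (M' - M0)))"
      using Pclas_nested_step by simp
  qed
qed (rule assms(3))

section \<open>Initial and newly created colours\<close>

lemma urn_cond_law_initial_colour:
  assumes "0 < sum_list c0" "k < length c0"
  shows "cond_law (urn l c0 n) (Mk (Suc k)) (Mk k)
           (\<lambda>M. Pclas (Mk (Suc k) c0 - Mk k c0) (Mk k c0) (M - Mk (Suc k) c0))"
proof (rule urn_cond_law_Pclas[OF assms(1) _ _ _ le0])
  show "Mk (Suc k) c0 - Mk k c0 + Mk k c0 = Mk (Suc k) c0"
    using Mk_mono[of k "Suc k" c0] by simp
  show "cond_law (urn l c0 0) (Mk (Suc k)) (Mk k)
      (\<lambda>M. Pclas (Mk (Suc k) c0 - Mk k c0) (Mk k c0) (M - Mk (Suc k) c0))"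
    by (rule cond_law_deterministic[where x = "Mk (Suc k) c0" and y = "Mk k c0"]) simp_all
  fix m xs
  assume "xs \<in> set_pmf (urn l c0 m)"
  then show "Suc k \<le> length xs \<and> Mk (Suc k) c0 \<le> Mk (Suc k) xs"
    using urn_length_sum_list[OF assms(1)] urn_Mk_mono[OF assms(1) le0] assms(2) by fastforce
qed

lemma urn_at_colour_creation:
  assumes "0 < sum_list c0" "0 < l" "length c0 \<le> k"
    and "xs \<in> set_pmf (urn l c0 (l * (k - length c0 + 1)))"
  obtains ys where "xs = ys @ [1]" "length ys = k"
    "sum_list ys = sum_list c0 + l * (k - length c0 + 1) + (k - length c0)"
proof -
  define p where "p = k - length c0 + 1"
  have "l * p = Suc (l * p - 1)"
    using assms(2) by (simp add: p_def)
  with assms(4) obtain ys where ys: "xs = ys @ [1]"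
    by (metis assms(1) dvd_triv_left p_def urn_last_colour)
  moreover have "length xs = length c0 + p" "sum_list xs = sum_list c0 + l * p + p"
    using urn_length_sum_list[OF assms(1,4)] assms(2) by (simp_all add: p_def)
  ultimately show ?thesis
    using that assms(3) by (simp add: p_def)
qed

lemma urn_length_after_colour_creation:
  assumes "0 < sum_list c0" "0 < l" "length c0 \<le> k"
    and "l * (k - length c0 + 1) \<le> m" "xs \<in> set_pmf (urn l c0 m)"
  shows "Suc k \<le> length xs"
proof -
  have "k - length c0 + 1 \<le> m div l"
    using div_le_mono[OF assms(4), of l] assms(2) by simp
  then show ?thesis
    using urn_length_sum_list[OF assms(1,5)] assms(3) by simp
qed

lemma Mk_urn_Pimm:
  assumes "0 < sum_list c0" "0 < l" "length c0 \<le> k" "l * (k - length c0 + 1) \<le> n"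
  shows "map_pmf (Mk k) (urn l c0 n)
           = Pimm l 1 (sum_list c0 + l * (k - length c0 + 1) + (k - length c0)) (n - l * (k - length c0 + 1))"
proof -
  define n0 where "n0 = l * (k - length c0 + 1)"
  define W where "W = sum_list c0 + n0 + (k - length c0)"
  let ?f = "\<lambda>xs. (sum_list xs - Mk k xs, Mk k xs)"
  have "map_pmf ?f (urn l c0 n0) = map_pmf (\<lambda>_. (1, W)) (urn l c0 n0)"
  proof (rule map_pmf_cong[OF refl])
    fix xs
    assume "xs \<in> set_pmf (urn l c0 n0)"
    with assms(1-3) obtain ys where "xs = ys @ [1]" "length ys = k" "sum_list ys = W"
      unfolding n0_def W_def by (rule urn_at_colour_creation)
    then show "?f xs = (1, W)"
      by (simp add: Mk_snoc Mk_eq_sum_list)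
  qed
  then have base: "map_pmf ?f (urn l c0 n0) = return_pmf (1, W)"
    by simp
  have step: "map_pmf ?f (urn_step l (Suc (n0 + j)) xs) = two_step (\<lambda>j. l dvd j) (Suc j) (?f xs)"
    if "xs \<in> set_pmf (urn l c0 (n0 + j))" for j xs
  proof (rule map_urn_step_two_step)
    show "k \<le> length xs"
      using urn_length_after_colour_creation[OF assms(1-3) _ that] n0_def by simp
    show "0 < sum_list xs"
      using sum_list_urn_pos[OF assms(1) that] .
    show "(l dvd Suc j) = (l dvd Suc (n0 + j))"
      by (metis n0_def add_Suc_right dvd_add_right_iff dvd_triv_left)
  qed
  have lumped: "map_pmf ?f (urn l c0 n) = two_urn (\<lambda>j. l dvd j) 1 W (n - n0)"
    using urn_lumps_to_two_urn[OF base step, of "n - n0"] assms(4) by (simp add: n0_def)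
  show ?thesis
    unfolding Pimm_def n0_def[symmetric] W_def[symmetric] lumped[symmetric]
    by (simp add: map_pmf_comp)
qed

lemma urn_cond_law_created_colour:
  assumes "0 < sum_list c0" "0 < l" "length c0 \<le> k" "l * (k - length c0 + 1) \<le> n"
  shows "cond_law (urn l c0 n) (Mk (Suc k)) (Mk k)
           (\<lambda>M. Pclas 1 (sum_list c0 + l * (k - length c0 + 1) + (k - length c0))
                        (M - sum_list c0 - (l + 1) * (k - length c0 + 1)))"
proof -
  define n0 where "n0 = l * (k - length c0 + 1)"
  define W where "W = sum_list c0 + n0 + (k - length c0)"
  have created: "Mk (Suc k) xs = Suc W \<and> Mk k xs = W" if "xs \<in> set_pmf (urn l c0 n0)" for xs
  proof -
    from assms(1-3) that obtain ys where "xs = ys @ [1]" "length ys = k" "sum_list ys = W"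
      unfolding n0_def W_def by (rule urn_at_colour_creation)
    then show ?thesis
      by (simp add: Mk_snoc Mk_eq_sum_list)
  qed
  have "map_pmf (\<lambda>xs. (Mk (Suc k) xs, Mk k xs)) (urn l c0 n0)
      = map_pmf (\<lambda>_. (Suc W, W)) (urn l c0 n0)"
    by (rule map_pmf_cong) (simp_all add: created)
  then have base: "cond_law (urn l c0 n0) (Mk (Suc k)) (Mk k) (\<lambda>M. Pclas 1 W (M - Suc W))"
    by (intro cond_law_deterministic[where x = "Suc W" and y = W]) simp_all
  have after: "Suc k \<le> length xs \<and> Suc W \<le> Mk (Suc k) xs"
    if m: "n0 \<le> m" and xs: "xs \<in> set_pmf (urn l c0 m)" for m xs
  proof
    show "Suc k \<le> length xs"
      using urn_length_after_colour_creation[OF assms(1-3) _ xs] m by (simp add: n0_def)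
    obtain ys where "ys \<in> set_pmf (urn l c0 n0)" "Mk (Suc k) ys \<le> Mk (Suc k) xs"
      using urn_Mk_mono[OF assms(1) m xs] by blast
    then show "Suc W \<le> Mk (Suc k) xs"
      using created by simp
  qed
  have "cond_law (urn l c0 n) (Mk (Suc k)) (Mk k) (\<lambda>M. Pclas 1 W (M - Suc W))"
    using urn_cond_law_Pclas[OF assms(1) _ base after] assms(4) by (simp add: n0_def)
  moreover have "M - sum_list c0 - (l + 1) * (k - length c0 + 1) = M - Suc W" for M
    using assms(3) by (simp add: W_def n0_def)
  ultimately show ?thesis
    by (simp add: W_def n0_def)
qed

theorem lemma3p1:
  fixes l s k n :: nat and c0 :: "nat list"
  assumes "l \<ge> 1"
    and "length c0 = s" and "s \<ge> 1"
    and "\<forall>x\<in>set c0. x \<ge> 1"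
  shows
   "(s \<le> k \<and> l * (k - s + 1) \<le> n \<longrightarrow>
       map_pmf (Mk k) (urn l c0 n)
       = Pimm l 1 (mcum c0 s + l * (k - s + 1) + (k - s)) (n - l * (k - s + 1)))
    \<and> (1 \<le> k \<and> k < s \<longrightarrow>
       cond_law (urn l c0 n) (Mk (k + 1)) (Mk k)
         (\<lambda>M. Pclas (mcum c0 (k + 1) - mcum c0 k) (mcum c0 k) (M - mcum c0 (k + 1))))
    \<and> (s \<le> k \<and> l * (k - s + 1) \<le> n \<longrightarrow>
       cond_law (urn l c0 n) (Mk (k + 1)) (Mk k)
         (\<lambda>M. Pclas 1 (mcum c0 s + l * (k - s + 1) + (k - s))
                      (M - mcum c0 s - (l + 1) * (k - s + 1))))"
proof -
  obtain x where "x \<in> set c0"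
    using assms(2,3) by (cases c0) auto
  with assms(4) have pos: "0 < sum_list c0"
    using member_le_sum_list[of x c0] by fastforce
  have mcum_Mk: "mcum c0 j = Mk j c0" for j
    by (simp add: mcum_def Mk_def)
  have mcum_length: "mcum c0 (length c0) = sum_list c0"
    by (simp add: mcum_def)
  show ?thesis
  proof (intro conjI impI)
    assume "s \<le> k \<and> l * (k - s + 1) \<le> n"
    with assms(1) pos show "map_pmf (Mk k) (urn l c0 n)
        = Pimm l 1 (mcum c0 s + l * (k - s + 1) + (k - s)) (n - l * (k - s + 1))"
      unfolding assms(2)[symmetric] mcum_length by (intro Mk_urn_Pimm) auto
  next
    assume "1 \<le> k \<and> k < s"
    with assms(2) pos show "cond_law (urn l c0 n) (Mk (k + 1)) (Mk k)
        (\<lambda>M. Pclas (mcum c0 (k + 1) - mcum c0 k) (mcum c0 k) (M - mcum c0 (k + 1)))"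
      using urn_cond_law_initial_colour[of c0 k l n] unfolding mcum_Mk by simp
  next
    assume "s \<le> k \<and> l * (k - s + 1) \<le> n"
    with assms(1) pos show "cond_law (urn l c0 n) (Mk (k + 1)) (Mk k)
        (\<lambda>M. Pclas 1 (mcum c0 s + l * (k - s + 1) + (k - s)) (M - mcum c0 s - (l + 1) * (k - s + 1)))"
      using urn_cond_law_created_colour[of c0 l k n] unfolding assms(2)[symmetric] mcum_length
      by simp
  qed
qed

end
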